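(* Let $\beta>\alpha>0$ and let $q=(q_1,q_2,q_3,q_4)\in(\mathbb{R}^2)^4$ be a convex non-collinear central configuration of the planar Newtonian 4-body problem with masses $m_1=m_2=\beta$, $m_3=m_4=\alpha$, the vertices being labelled so that $q_1,q_2,q_3,q_4$ is the cyclic order around the convex quadrilateral (so the equal masses occupy adjacent vertices). If $r_{13}=r_{24}$, then the configuration is symmetric and forms an isosceles trapezoid: the side $q_1q_2$ is parallel to the side $q_3q_4$, and $r_{14}=r_{23}$.
   Context: Bodies have positions $q_i\in\mathbb{R}^2$ and masses $m_i>0$, $i=1,\dots,4$; $r_{ij}=\|q_i-q_j\|$. The Newtonian potential is $U(q)=\sum_{i<j}m_im_j/r_{ij}$ (gravitational constant $1$). A configuration $q$ with $q_i\neq q_j$ for all $i\neq j$ and center of mass $\sum_i m_iq_i=0$ is a central configuration if there is a constant $\lambda$ with $\frac{1}{m_i}\frac{\partial U}{\partial q_i}=\lambda q_i$ for all $i$, i.e. $\sum_{j\neq i} m_j\frac{q_j-q_i}{r_{ij}^3}=\lambda q_i$. "Convex non-collinear" means the four points are the vertices of a strictly convex quadrilateral (no three of them collinear). *)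

theory Defs
  imports "HOL-Analysis.Analysis"
begin

definition cross2 :: "real^2 \<Rightarrow> real^2 \<Rightarrow> real" where
  "cross2 u v = u$1 * v$2 - u$2 * v$1"

text \<open>Central configuration of the planar Newtonian 4-body problem; bodies indexed 1..4,
  gravitational constant 1.\<close>
definition central_config4 :: "(nat \<Rightarrow> real) \<Rightarrow> (nat \<Rightarrow> real^2) \<Rightarrow> bool" where
  "central_config4 m q \<longleftrightarrow>
     (\<forall>i\<in>{1..4}. \<forall>j\<in>{1..4}. i \<noteq> j \<longrightarrow> q i \<noteq> q j) \<and>
     (\<Sum>i=1..4. m i *\<^sub>R q i) = 0 \<and>
     (\<exists>lam::real. \<forall>i\<in>{1..4}.
        (\<Sum>j\<in>{1..4} - {i}. (m j / dist (q i) (q j) ^ 3) *\<^sub>R (q j - q i)) = lam *\<^sub>R q i)"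

definition convex_quad :: "(nat \<Rightarrow> real^2) \<Rightarrow> bool" where
  "convex_quad q \<longleftrightarrow>
     (let t1 = cross2 (q 2 - q 1) (q 3 - q 2);
          t2 = cross2 (q 3 - q 2) (q 4 - q 3);
          t3 = cross2 (q 4 - q 3) (q 1 - q 4);
          t4 = cross2 (q 1 - q 4) (q 2 - q 1)
      in (t1 > 0 \<and> t2 > 0 \<and> t3 > 0 \<and> t4 > 0) \<or> (t1 < 0 \<and> t2 < 0 \<and> t3 < 0 \<and> t4 < 0))"

end

theory Submission
  imports Defs
begin

text \<open>Write \<open>t\<^sub>i\<^sub>j = r\<^sub>i\<^sub>j\<^sup>-\<^sup>3 - \<mu>\<close> with \<open>\<mu> = -\<lambda>/M\<close>, \<open>M\<close> the total mass. The equations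
  of a central configuration become \<open>\<Sum>\<^sub>j m\<^sub>j t\<^sub>i\<^sub>j (q\<^sub>j - q\<^sub>i) = 0\<close>, and crossing them with
  \<open>q\<^sub>k - q\<^sub>i\<close> gives linear relations among the \<open>t\<^sub>i\<^sub>j\<close> whose coefficients are signed
  triangle areas \<open>\<Delta>\<^sub>i\<^sub>j\<^sub>k\<close>. Equal diagonals mean \<open>t\<^sub>1\<^sub>3 = t\<^sub>2\<^sub>4\<close>, and two of the relations
  then give \<open>t\<^sub>1\<^sub>3 (\<Delta>\<^sub>1\<^sub>2\<^sub>3 \<Delta>\<^sub>1\<^sub>3\<^sub>4 - \<Delta>\<^sub>1\<^sub>2\<^sub>4 \<Delta>\<^sub>2\<^sub>3\<^sub>4) = 0\<close>. If \<open>t\<^sub>1\<^sub>3 = 0\<close>, every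
  \<open>t\<^sub>i\<^sub>j\<close> vanishes and the four points would be pairwise equidistant, impossible in the plane.
  Since also \<open>\<Delta>\<^sub>1\<^sub>2\<^sub>3 + \<Delta>\<^sub>1\<^sub>3\<^sub>4 = \<Delta>\<^sub>1\<^sub>2\<^sub>4 + \<Delta>\<^sub>2\<^sub>3\<^sub>4\<close>, either \<open>\<Delta>\<^sub>1\<^sub>2\<^sub>3 = \<Delta>\<^sub>2\<^sub>3\<^sub>4\<close> or
  \<open>\<Delta>\<^sub>1\<^sub>2\<^sub>3 = \<Delta>\<^sub>1\<^sub>2\<^sub>4\<close>. The first makes \<open>q\<^sub>1q\<^sub>4 \<parallel> q\<^sub>2q\<^sub>3\<close>, so the equal diagonals force
  \<open>r\<^sub>1\<^sub>2 = r\<^sub>3\<^sub>4\<close>, and then the relations give \<open>(\<beta>\<^sup>2 - \<alpha>\<^sup>2) t\<^sub>1\<^sub>2 = 0\<close> and \<open>t\<^sub>1\<^sub>3 = 0\<close>,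
  excluded. The second says \<open>q\<^sub>1q\<^sub>2 \<parallel> q\<^sub>3q\<^sub>4\<close>, and the relations then give \<open>t\<^sub>1\<^sub>4 = t\<^sub>2\<^sub>3\<close>.\<close>

definition area2 :: "real^2 \<Rightarrow> real^2 \<Rightarrow> real^2 \<Rightarrow> real" where
  "area2 a b c = cross2 (b - a) (c - a)"

lemma cross2_scaleR_left: "cross2 (c *\<^sub>R u) v = c * cross2 u v"
  by (simp add: cross2_def algebra_simps)

lemma cross2_scaleR_right: "cross2 u (c *\<^sub>R v) = c * cross2 u v"
  by (simp add: cross2_def algebra_simps)

lemma cross2_sum_left: "cross2 (\<Sum>j\<in>J. f j) v = (\<Sum>j\<in>J. cross2 (f j) v)"
  by (simp add: cross2_def sum_distrib_right sum_subtractf)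

lemma cross2_zero_left: "cross2 0 v = 0"
  by (simp add: cross2_def)

lemma inner_vec2: "inner (u::real^2) v = u$1 * v$1 + u$2 * v$2"
  by (simp add: inner_vec_def sum_2)

lemma cross2_eq_0_imp_parallel:
  assumes "cross2 u v = 0" and "u \<noteq> 0"
  obtains k where "v = k *\<^sub>R u"
proof
  have "u$1 * u$1 + u$2 * u$2 \<noteq> 0"
    using assms(2) by (simp add: vec_eq_iff forall_2 sum_squares_eq_zero_iff)
  then show "v = (inner u v / inner u u) *\<^sub>R u"
    using assms(1) by (simp add: vec_eq_iff forall_2 inner_vec2 cross2_def field_simps)
qed

lemma area2_swap: "area2 a b c = - area2 a c b"
  by (simp add: area2_def cross2_def algebra_simps)

lemma area2_rotate: "area2 a b c = area2 c a b"
  by (simp add: area2_def cross2_def algebra_simps)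

lemma area2_same_left [simp]: "area2 a a c = 0"
  by (simp add: area2_def cross2_def)

lemma area2_same_right [simp]: "area2 a b b = 0"
  by (simp add: area2_def cross2_def)

lemma cross2_diff_area2: "cross2 (b - a) (d - c) = area2 a b d - area2 a b c"
  by (simp add: area2_def cross2_def algebra_simps)

lemma area2_add: "area2 a b c + area2 a c d = area2 a b d + area2 b c d"
  by (simp add: area2_def cross2_def algebra_simps)

lemma convex_quad_area2:
  "convex_quad q \<longleftrightarrow>
    (let P = area2 (q 1) (q 2) (q 3); Q = area2 (q 1) (q 3) (q 4);
         R = area2 (q 1) (q 2) (q 4); S = area2 (q 2) (q 3) (q 4)
     in (0 < P \<and> 0 < Q \<and> 0 < R \<and> 0 < S) \<or> (P < 0 \<and> Q < 0 \<and> R < 0 \<and> S < 0))"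
proof -
  have "cross2 (q 2 - q 1) (q 3 - q 2) = area2 (q 1) (q 2) (q 3)"
    "cross2 (q 3 - q 2) (q 4 - q 3) = area2 (q 2) (q 3) (q 4)"
    "cross2 (q 4 - q 3) (q 1 - q 4) = area2 (q 1) (q 3) (q 4)"
    "cross2 (q 1 - q 4) (q 2 - q 1) = area2 (q 1) (q 2) (q 4)"
    by (simp_all add: area2_def cross2_def algebra_simps)
  then show ?thesis
    unfolding convex_quad_def Let_def by auto
qed

lemma gram_det_plane_eq_0:
  fixes u v w :: "real^2"
  shows "inner u u * inner v v * inner w w + 2 * inner u v * inner v w * inner u w
    = inner u u * (inner v w)\<^sup>2 + inner v v * (inner u w)\<^sup>2 + inner w w * (inner u v)\<^sup>2"
  unfolding inner_vec2 by algebra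

lemma no_four_equidistant_points:
  fixes a b c d :: "real^2"
  assumes "a \<noteq> b" and "dist a c = dist a b" and "dist a d = dist a b"
    and "dist b c = dist a b" and "dist b d = dist a b" and "dist c d = dist a b"
  shows False
proof -
  define D where "D = (dist a b)\<^sup>2"
  have sq: "\<And>x y. inner (x - y) (x - y) = (dist x y)\<^sup>2"
    by (simp add: dist_norm power2_norm_eq_inner)
  have side: "inner (x - a) (x - a) = D" if "dist a x = dist a b" for x
    using sq[of x a] that by (simp add: D_def dist_commute)
  have angle: "inner (x - a) (y - a) = D / 2"
    if "dist a x = dist a b" "dist a y = dist a b" "dist x y = dist a b" for x y
    using sq[of x a] sq[of y a] sq[of x y] that
    by (simp add: D_def dist_commute inner_diff inner_commute algebra_simps)
  have "D * D * D + 2 * (D / 2) * (D / 2) * (D / 2) = 3 * (D * (D / 2)\<^sup>2)"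
    using gram_det_plane_eq_0[of "b - a" "c - a" "d - a"] assms
    by (simp add: side angle dist_commute)
  then have "D * D * D = 0"
    by (simp add: power2_eq_square field_simps)
  with assms(1) show False by (simp add: D_def)
qed

lemma isosceles_trapezoid_of_equal_diagonals:
  fixes a b c d :: "'a::real_inner"
  assumes "d - a = k *\<^sub>R (c - b)" and "k \<noteq> -1" and "dist a c = dist b d"
  shows "dist a b = dist c d"
proof -
  define u e where "u = b - a" and "e = c - b"
  have sq: "\<And>x y. (dist x y)\<^sup>2 = inner (x - y) (x - y)"
    by (simp add: dist_norm power2_norm_eq_inner)
  have diffs: "c - a = u + e" "d - b = k *\<^sub>R e - u" "d - c = (k - 1) *\<^sub>R e - u" "b - a = u"
    using assms(1) by (simp_all add: u_def e_def algebra_simps)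
  have "inner (u + e) (u + e) = inner (k *\<^sub>R e - u) (k *\<^sub>R e - u)"
    using assms(3) sq[of c a] sq[of d b] by (simp add: diffs dist_commute)
  then have "(k + 1) * (2 * inner u e) = (k + 1) * ((k - 1) * inner e e)"
    by (simp add: inner_diff inner_add inner_commute algebra_simps)
  then have "2 * inner u e = (k - 1) * inner e e"
    using assms(2) by simp
  moreover have "inner ((k - 1) *\<^sub>R e - u) ((k - 1) *\<^sub>R e - u)
      = (k - 1) * ((k - 1) * inner e e - 2 * inner u e) + inner u u"
    by (simp add: inner_diff inner_commute algebra_simps)
  ultimately have "(dist a b)\<^sup>2 = (dist c d)\<^sup>2"
    using sq[of b a] sq[of d c] by (simp add: diffs dist_commute)
  then show ?thesis
    by (simp add: power2_eq_iff_nonneg)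
qed

lemma isosceles_trapezoid_of_equal_areas:
  fixes a b c d :: "real^2"
  assumes "area2 a b c = area2 b c d" and "0 < area2 a b c * area2 a b d"
    and "dist a c = dist b d"
  shows "dist a b = dist c d"
proof -
  have "cross2 (c - b) (d - a) = 0"
    using assms(1) by (simp add: area2_def cross2_def algebra_simps)
  moreover have "c - b \<noteq> 0"
    using assms(2) by (auto simp: area2_def cross2_def)
  ultimately obtain k where k: "d - a = k *\<^sub>R (c - b)"
    by (rule cross2_eq_0_imp_parallel)
  then have "area2 a b d = k * cross2 (b - a) (c - b)"
    by (simp add: area2_def cross2_scaleR_right)
  also have "cross2 (b - a) (c - b) = area2 a b c"
    by (simp add: area2_def cross2_def algebra_simps)
  finally have "0 < k * (area2 a b c)\<^sup>2"
    using assms(2) by (simp add: power2_eq_square ac_simps)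
  then have "0 < k"
    by (simp add: zero_less_mult_iff)
  then show ?thesis
    using isosceles_trapezoid_of_equal_diagonals[OF k _ assms(3)] by simp
qed

lemma central_config4_balanced:
  assumes "central_config4 m q" and "(\<Sum>i=1..4. m i) \<noteq> 0"
  obtains \<mu> where
    "\<And>i. i \<in> {1..4} \<Longrightarrow> (\<Sum>j=1..4. (m j * (1 / dist (q i) (q j) ^ 3 - \<mu>)) *\<^sub>R (q j - q i)) = 0"
proof -
  define M where "M = (\<Sum>i=1..4. m i)"
  obtain lam where centre: "(\<Sum>j=1..4. m j *\<^sub>R q j) = 0" and
    forces: "\<And>i. i \<in> {1..4} \<Longrightarrow>
      (\<Sum>j\<in>{1..4} - {i}. (m j / dist (q i) (q j) ^ 3) *\<^sub>R (q j - q i)) = lam *\<^sub>R q i"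
    using assms(1) unfolding central_config4_def by blast
  \<comment> \<open>Subtracting \<open>\<mu>\<close> times \<open>\<Sum>\<^sub>j m\<^sub>j (q\<^sub>j - q\<^sub>i) = -M q\<^sub>i\<close> (centre of mass at 0) removes \<open>\<lambda>\<close>.\<close>
  define \<mu> where "\<mu> = - lam / M"
  have "(\<Sum>j=1..4. (m j * (1 / dist (q i) (q j) ^ 3 - \<mu>)) *\<^sub>R (q j - q i)) = 0"
    if i: "i \<in> {1..4}" for i
  proof -
    have "(\<Sum>j=1..4. (m j * (1 / dist (q i) (q j) ^ 3 - \<mu>)) *\<^sub>R (q j - q i))
        = (\<Sum>j=1..4. (m j / dist (q i) (q j) ^ 3) *\<^sub>R (q j - q i))
          - \<mu> *\<^sub>R (\<Sum>j=1..4. m j *\<^sub>R (q j - q i))"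
      by (simp add: scaleR_sum_right sum_subtractf[symmetric] right_diff_distrib
          scaleR_left_diff_distrib mult.commute[of \<mu>])
    also have "(\<Sum>j=1..4. (m j / dist (q i) (q j) ^ 3) *\<^sub>R (q j - q i)) = lam *\<^sub>R q i"
      using forces[OF i] by (subst sum.remove[OF _ i]) simp_all
    also have "(\<Sum>j=1..4. m j *\<^sub>R (q j - q i)) = - M *\<^sub>R q i"
      using centre by (simp add: M_def scaleR_diff_right sum_subtractf scaleR_sum_left)
    also have "lam *\<^sub>R q i - \<mu> *\<^sub>R (- M *\<^sub>R q i) = 0"
      using assms(2) unfolding M_def[symmetric] by (simp add: \<mu>_def)
    finally show ?thesis .
  qed
  then show thesis by (rule that)
qed

lemma central_config4_dziobek:
  assumes "central_config4 m q" and "(\<Sum>i=1..4. m i) \<noteq> 0"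
  obtains t :: "nat \<Rightarrow> nat \<Rightarrow> real" where
    "\<And>i j k l. t i j = t k l \<longleftrightarrow> dist (q i) (q j) = dist (q k) (q l)"
    and "\<And>i k. i \<in> {1..4} \<Longrightarrow> (\<Sum>j=1..4. m j * t i j * area2 (q i) (q j) (q k)) = 0"
proof -
  obtain \<mu> where balanced: "\<And>i. i \<in> {1..4} \<Longrightarrow>
      (\<Sum>j=1..4. (m j * (1 / dist (q i) (q j) ^ 3 - \<mu>)) *\<^sub>R (q j - q i)) = 0"
    using central_config4_balanced[OF assms] by blast
  define t where "t i j = 1 / dist (q i) (q j) ^ 3 - \<mu>" for i j
  show thesis
  proof (rule that)
    show "t i j = t k l \<longleftrightarrow> dist (q i) (q j) = dist (q k) (q l)" for i j k l
      by (simp add: t_def power_eq_iff_eq_base)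
    fix i k :: nat
    assume "i \<in> {1..4}"
    have "(\<Sum>j=1..4. m j * t i j * area2 (q i) (q j) (q k))
        = cross2 (\<Sum>j=1..4. (m j * t i j) *\<^sub>R (q j - q i)) (q k - q i)"
      by (simp add: area2_def cross2_sum_left cross2_scaleR_left)
    also have "\<dots> = 0"
      unfolding t_def by (simp only: balanced[OF \<open>i \<in> {1..4}\<close>] cross2_zero_left)
    finally show "(\<Sum>j=1..4. m j * t i j * area2 (q i) (q j) (q k)) = 0" .
  qed
qed

lemma eq_or_eq_if_sum_eq_and_prod_eq:
  fixes P Q R S :: "'a::idom"
  assumes "P + Q = R + S" and "P * Q = R * S"
  shows "P = R \<or> P = S"
proof -
  have "(P - R) * (P - S) = 0"
    using assms by algebra
  then show ?thesis by simp
qed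

lemma atLeastAtMost_1_4: "{1..4::nat} = {1, 2, 3, 4}"
  by auto

text \<open>The function \<open>t\<close> stands for \<open>t\<^sub>i\<^sub>j = r\<^sub>i\<^sub>j\<^sup>-\<^sup>3 - \<mu>\<close>; all that is used of it is that it
  determines the distance \<open>r\<^sub>i\<^sub>j\<close>.\<close>

locale cc4_equal_diagonals =
  fixes \<alpha> \<beta> :: real and m :: "nat \<Rightarrow> real" and q :: "nat \<Rightarrow> real^2"
    and t :: "nat \<Rightarrow> nat \<Rightarrow> real"
  assumes alpha_pos: "0 < \<alpha>" and alpha_less_beta: "\<alpha> < \<beta>"
    and masses: "m 1 = \<beta>" "m 2 = \<beta>" "m 3 = \<alpha>" "m 4 = \<alpha>"
    and convex: "convex_quad q"
    and diagonals: "dist (q 1) (q 3) = dist (q 2) (q 4)"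
    and t_eq_iff: "\<And>i j k l. t i j = t k l \<longleftrightarrow> dist (q i) (q j) = dist (q k) (q l)"
    and dziobek: "\<And>i k. i \<in> {1..4} \<Longrightarrow> (\<Sum>j=1..4. m j * t i j * area2 (q i) (q j) (q k)) = 0"
begin

abbreviation \<Delta> :: "nat \<Rightarrow> nat \<Rightarrow> nat \<Rightarrow> real" where
  "\<Delta> i j k \<equiv> area2 (q i) (q j) (q k)"

lemma area_signs:
  "(0 < \<Delta> 1 2 3 \<and> 0 < \<Delta> 1 3 4 \<and> 0 < \<Delta> 1 2 4 \<and> 0 < \<Delta> 2 3 4)
   \<or> (\<Delta> 1 2 3 < 0 \<and> \<Delta> 1 3 4 < 0 \<and> \<Delta> 1 2 4 < 0 \<and> \<Delta> 2 3 4 < 0)"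
  using convex by (simp add: convex_quad_area2 Let_def)

lemma areas_nonzero: "\<Delta> 1 2 3 \<noteq> 0" "\<Delta> 1 3 4 \<noteq> 0" "\<Delta> 1 2 4 \<noteq> 0" "\<Delta> 2 3 4 \<noteq> 0"
  using area_signs by auto

lemma t_sym: "t j i = t i j"
  by (simp add: t_eq_iff dist_commute)

lemma t24_eq_t13: "t 2 4 = t 1 3"
  using diagonals by (simp add: t_eq_iff)

text \<open>\<open>dziobek_ik\<close> is the equation of body \<open>i\<close> crossed with \<open>q\<^sub>k - q\<^sub>i\<close>.\<close>

lemma dziobek_12: "t 1 3 * \<Delta> 1 2 3 + t 1 4 * \<Delta> 1 2 4 = 0"
proof -
  have "\<alpha> * (t 1 3 * \<Delta> 1 2 3 + t 1 4 * \<Delta> 1 2 4) = 0"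
    using dziobek[of 1 2] area2_swap[of "q 1" "q 3" "q 2"] area2_swap[of "q 1" "q 4" "q 2"]
    unfolding atLeastAtMost_1_4 by (simp del: One_nat_def add: masses algebra_simps)
  with alpha_pos show ?thesis by simp
qed

lemma dziobek_21: "t 2 3 * \<Delta> 1 2 3 + t 2 4 * \<Delta> 1 2 4 = 0"
proof -
  have "\<alpha> * (t 2 3 * \<Delta> 1 2 3 + t 2 4 * \<Delta> 1 2 4) = 0"
    using dziobek[of 2 1] area2_rotate[of "q 2" "q 3" "q 1"] area2_rotate[of "q 2" "q 4" "q 1"]
    unfolding atLeastAtMost_1_4 by (simp del: One_nat_def add: masses algebra_simps)
  with alpha_pos show ?thesis by simp
qed

lemma dziobek_43: "t 1 4 * \<Delta> 1 3 4 + t 2 4 * \<Delta> 2 3 4 = 0"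
proof -
  have "\<beta> * (t 1 4 * \<Delta> 1 3 4 + t 2 4 * \<Delta> 2 3 4) = 0"
    using dziobek[of 4 3] area2_rotate[of "q 1" "q 3" "q 4", symmetric]
      area2_rotate[of "q 2" "q 3" "q 4", symmetric]
      t_sym[of 4 1] t_sym[of 4 2]
    unfolding atLeastAtMost_1_4 by (simp del: One_nat_def add: masses algebra_simps)
  with alpha_pos alpha_less_beta show ?thesis by simp
qed

lemma dziobek_13: "\<beta> * t 1 2 * \<Delta> 1 2 3 = \<alpha> * t 1 4 * \<Delta> 1 3 4"
  using dziobek[of 1 3] area2_swap[of "q 1" "q 4" "q 3"]
  unfolding atLeastAtMost_1_4 by (simp del: One_nat_def add: masses algebra_simps)

lemma dziobek_32: "\<beta> * t 1 3 * \<Delta> 1 2 3 + \<alpha> * t 3 4 * \<Delta> 2 3 4 = 0"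
  using dziobek[of 3 2] area2_rotate[of "q 1" "q 2" "q 3", symmetric]
    area2_rotate[of "q 3" "q 4" "q 2"]
    t_sym[of 3 1]
  unfolding atLeastAtMost_1_4 by (simp del: One_nat_def add: masses algebra_simps)

lemma t13_nonzero: "t 1 3 \<noteq> 0"
proof
  assume "t 1 3 = 0"
  with dziobek_12 dziobek_21 dziobek_13 dziobek_32 t24_eq_t13 areas_nonzero alpha_pos alpha_less_beta
  have "t 1 4 = t 1 2" "t 2 3 = t 1 2" "t 1 3 = t 1 2" "t 2 4 = t 1 2" "t 3 4 = t 1 2"
    by auto
  moreover have "q 1 \<noteq> q 2"
    using areas_nonzero(1) by auto
  ultimately show False
    using no_four_equidistant_points[of "q 1" "q 2" "q 3" "q 4"] by (simp add: t_eq_iff)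
qed

lemma areas_eq_cases: "\<Delta> 1 2 3 = \<Delta> 1 2 4 \<or> \<Delta> 1 2 3 = \<Delta> 2 3 4"
proof (rule eq_or_eq_if_sum_eq_and_prod_eq)
  show "\<Delta> 1 2 3 + \<Delta> 1 3 4 = \<Delta> 1 2 4 + \<Delta> 2 3 4"
    by (rule area2_add)
  have "t 1 3 * (\<Delta> 1 2 3 * \<Delta> 1 3 4 - \<Delta> 1 2 4 * \<Delta> 2 3 4) = 0"
    using dziobek_12 dziobek_43 t24_eq_t13 by algebra
  with t13_nonzero show "\<Delta> 1 2 3 * \<Delta> 1 3 4 = \<Delta> 1 2 4 * \<Delta> 2 3 4"
    by simp
qed

lemma area_123_ne_234: "\<Delta> 1 2 3 \<noteq> \<Delta> 2 3 4"
proof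
  assume eq: "\<Delta> 1 2 3 = \<Delta> 2 3 4"
  have "0 < \<Delta> 1 2 3 * \<Delta> 1 2 4"
    using area_signs by (auto intro: mult_pos_pos mult_neg_neg)
  with eq have "dist (q 1) (q 2) = dist (q 3) (q 4)"
    using diagonals by (rule isosceles_trapezoid_of_equal_areas)
  then have t34: "t 3 4 = t 1 2"
    by (simp add: t_eq_iff)
  have "(\<beta> * t 1 2 + \<alpha> * t 1 3) * \<Delta> 1 2 3 = 0"
    using dziobek_12 dziobek_13 eq area2_add[of "q 1" "q 2" "q 3" "q 4"] by algebra
  moreover have "(\<alpha> * t 1 2 + \<beta> * t 1 3) * \<Delta> 1 2 3 = 0"
    using dziobek_32 t34 eq by algebra
  ultimately have "\<beta> * t 1 2 = - \<alpha> * t 1 3" "\<alpha> * t 1 2 = - \<beta> * t 1 3"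
    using areas_nonzero by (simp_all add: eq_neg_iff_add_eq_0)
  then have "(\<beta> - \<alpha>) * (\<beta> + \<alpha>) * t 1 2 = 0"
    by algebra
  with alpha_pos alpha_less_beta have "t 1 2 = 0"
    by simp
  with \<open>\<beta> * t 1 2 = - \<alpha> * t 1 3\<close> alpha_pos t13_nonzero show False
    by simp
qed

lemma isosceles_trapezoid:
  "cross2 (q 2 - q 1) (q 4 - q 3) = 0 \<and> dist (q 1) (q 4) = dist (q 2) (q 3)"
proof -
  have eq: "\<Delta> 1 2 3 = \<Delta> 1 2 4"
    using areas_eq_cases area_123_ne_234 by blast
  with dziobek_12 dziobek_21 t24_eq_t13 have "(t 1 4 - t 2 3) * \<Delta> 1 2 4 = 0"
    by algebra
  with areas_nonzero have "t 1 4 = t 2 3"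
    by simp
  with eq show ?thesis
    by (simp add: cross2_diff_area2 t_eq_iff)
qed

end

theorem theorem1p1:
  fixes alpha beta :: real and m :: "nat \<Rightarrow> real" and q :: "nat \<Rightarrow> real^2"
  assumes "0 < alpha" and "alpha < beta"
    and "m 1 = beta" and "m 2 = beta" and "m 3 = alpha" and "m 4 = alpha"
    and "central_config4 m q"
    and "convex_quad q"
    and "dist (q 1) (q 3) = dist (q 2) (q 4)"
  shows "cross2 (q 2 - q 1) (q 4 - q 3) = 0 \<and> dist (q 1) (q 4) = dist (q 2) (q 3)"
proof -
  have "(\<Sum>i=1..4. m i) \<noteq> 0"
    using assms(1-6) unfolding atLeastAtMost_1_4 by simp
  then obtain t where "\<And>i j k l. t i j = t k l \<longleftrightarrow> dist (q i) (q j) = dist (q k) (q l)"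
    and "\<And>i k. i \<in> {1..4} \<Longrightarrow> (\<Sum>j=1..4. m j * t i j * area2 (q i) (q j) (q k)) = 0"
    using central_config4_dziobek[OF assms(7)] by blast
  then interpret cc4_equal_diagonals alpha beta m q t
    using assms by unfold_locales auto
  show ?thesis
    by (rule isosceles_trapezoid)
qed

end
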